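(* Let $(R,\mathfrak{m})$ be a commutative Artinian local ring with identity, $\mathfrak{m}\neq0$ and $\mathfrak{m}^2=0$. If $|R|>4$ (including the case $R$ infinite), then $L(x^6)=\{2,3,4,6\}$; if $|R|=4$, then $L(x^6)=\{2,4,6\}$.
   Context: A nonunit polynomial in $R[x]$ is irreducible if in any factorization into two polynomials one factor is a unit of $R[x]$. A positive integer $k$ is a length of $f$ if $f$ is a product of $k$ irreducible polynomials of $R[x]$; $L(f)$ denotes the set of lengths of $f$. *)

theory Defs
  imports "HOL-Computational_Algebra.Polynomial" "HOL-Computational_Algebra.Factorial_Ring"
begin

definition is_ideal :: "'a::comm_ring_1 set \<Rightarrow> bool" where
  "is_ideal I \<longleftrightarrow> 0 \<in> I \<and> (\<forall>a\<in>I. \<forall>b\<in>I. a + b \<in> I) \<and> (\<forall>r. \<forall>a\<in>I. r * a \<in> I)"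

definition artinian_ring :: "'a::comm_ring_1 itself \<Rightarrow> bool" where
  "artinian_ring _ \<longleftrightarrow>
     (\<forall>f :: nat \<Rightarrow> 'a set. (\<forall>n. is_ideal (f n)) \<and> (\<forall>n. f (Suc n) \<subseteq> f n)
        \<longrightarrow> (\<exists>N. \<forall>n\<ge>N. f n = f N))"

(* The set of non-units; the ring is local iff this set is a proper ideal,
   in which case it is the unique maximal ideal. *)
definition nonunits :: "'a::comm_ring_1 set" where
  "nonunits = {a. \<not> a dvd 1}"

definition local_ring :: "'a::comm_ring_1 itself \<Rightarrow> bool" where
  "local_ring _ \<longleftrightarrow> (0::'a) \<noteq> 1 \<and> is_ideal (nonunits :: 'a set)"

definition lengths :: "'a::comm_ring_1 poly \<Rightarrow> nat set" where
  "lengths f = {k. k > 0 \<and> (\<exists>fs. length fs = k \<and> (\<forall>g\<in>set fs. irreducible g) \<and> prod_list fs = f)}"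

end

theory Submission
  imports Defs
begin

text \<open>Write \<open>\<mm>\<close> for the maximal ideal. Modulo \<open>\<mm>\<close> every factor of \<open>x\<^sup>6\<close> is a unit multiple
  of a power \<open>x\<^sup>d\<close>, its residue degree, and the residue degrees of a factorization add up to 6.
  Because \<open>\<mm>\<^sup>2 = 0\<close>, a polynomial of residue degree 0 is a unit, an irreducible factor of residue
  degree at least 2 has a nonzero constant term, and \<open>x\<^sup>d + a\<close> with \<open>d \<ge> 1\<close> and \<open>0 \<noteq> a \<in> \<mm>\<close> is
  irreducible. A factor with nonzero constant term cannot have residue degree larger than all
  the other factors; this excludes the lengths 1 and 5 and forces residue degrees \<open>2, 2, 2\<close> in length 3.
  The factorizations \<open>(x\<^sup>3 + e)(x\<^sup>3 - e)\<close>, \<open>(x\<^sup>2 + e)(x\<^sup>2 - e) x x\<close>, \<open>x\<^sup>6\<close> and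
  \<open>(x\<^sup>2 + a)(x\<^sup>2 + b)(x\<^sup>2 + c)\<close> with \<open>a + b + c = 0\<close> give the lengths; nonzero \<open>a, b, c \<in> \<mm>\<close>
  summing to 0 exist unless \<open>\<mm> = {0, e}\<close>, which happens exactly when \<open>|R| = 4\<close>, and then a
  comparison of \<open>x\<^sup>4\<close> coefficients rules out length 3.\<close>

lemma coeff_X_power: "coeff ([:0, 1:] ^ n :: 'a::comm_semiring_1 poly) k = (if k = n then 1 else 0)"
proof -
  have "[:0, 1:] ^ n = (monom 1 n :: 'a poly)" by (simp add: monom_altdef)
  then show ?thesis by (simp add: coeff_monom)
qed

lemma prod_list_remove1: "x \<in> set xs \<Longrightarrow> prod_list xs = x * prod_list (remove1 x xs)"
  for xs :: "'a::comm_monoid_mult list"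
  by (induction xs) (auto simp: ac_simps)

lemma in_lengthsI:
  "prod_list fs = f \<Longrightarrow> \<forall>g\<in>set fs. irreducible g \<Longrightarrow> length fs = k \<Longrightarrow> 0 < k \<Longrightarrow> k \<in> lengths f"
  unfolding lengths_def by blast

lemma mult_shifts_eq_power:
  fixes x a b c :: "'a::comm_ring_1"
  shows "a + b = 0 \<Longrightarrow> a * b = 0 \<Longrightarrow> (x + a) * (x + b) = x ^ 2"
    and "a + b + c = 0 \<Longrightarrow> a * b = 0 \<Longrightarrow> a * c = 0 \<Longrightarrow> b * c = 0 \<Longrightarrow>
           (x + a) * (x + b) * (x + c) = x ^ 3"
proof -
  have "(x + a) * (x + b) = x ^ 2 + (a + b) * x + a * b"
    by (simp add: algebra_simps power2_eq_square)
  then show "a + b = 0 \<Longrightarrow> a * b = 0 \<Longrightarrow> (x + a) * (x + b) = x ^ 2" by simp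
  have "(x + a) * (x + b) * (x + c) = x ^ 3 + (a + b + c) * x ^ 2 + (a * b + a * c + b * c) * x + a * b * c"
    by (simp add: algebra_simps power2_eq_square power3_eq_cube)
  then show "a + b + c = 0 \<Longrightarrow> a * b = 0 \<Longrightarrow> a * c = 0 \<Longrightarrow> b * c = 0 \<Longrightarrow>
      (x + a) * (x + b) * (x + c) = x ^ 3" by simp
qed

lemma length_le_sum_list_pos:
  fixes h :: "'a \<Rightarrow> nat"
  shows "\<forall>x\<in>set xs. 0 < h x \<Longrightarrow> length xs \<le> sum_list (map h xs)"
  by (induction xs) auto

lemma sum_list_ge_two_members:
  fixes h :: "'a \<Rightarrow> nat"
  assumes pos: "\<forall>x\<in>set xs. 0 < h x" and x: "x \<in> set xs" and y: "y \<in> set (remove1 x xs)"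
  shows "h x + h y + (length xs - 2) \<le> sum_list (map h xs)"
proof -
  have "length (remove1 y (remove1 x xs)) \<le> sum_list (map h (remove1 y (remove1 x xs)))"
    using pos by (intro length_le_sum_list_pos) (meson notin_set_remove1)
  moreover have "length (remove1 y (remove1 x xs)) = length xs - 2"
    using x y by (simp add: length_remove1)
  ultimately show ?thesis
    using sum_list_map_remove1[OF x, of h] sum_list_map_remove1[OF y, of h] by simp
qed

lemma length_composition_6_without_strict_max:
  fixes h :: "'a \<Rightarrow> nat"
  assumes pos: "\<forall>x\<in>set xs. 0 < h x" and sum: "sum_list (map h xs) = 6"
    and no_strict_max: "\<forall>x\<in>set xs. 2 \<le> h x \<longrightarrow> (\<exists>y\<in>set (remove1 x xs). h x \<le> h y)"
  shows "length xs \<in> {2, 3, 4, 6}" and "length xs = 3 \<Longrightarrow> \<forall>x\<in>set xs. h x = 2"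
proof -
  have pair_bound: "h x + h x + (length xs - 2) \<le> 6" if "x \<in> set xs" "2 \<le> h x" for x
    using no_strict_max sum_list_ge_two_members[OF pos that(1)] that sum by fastforce
  have "length xs \<le> 6" using length_le_sum_list_pos[OF pos] sum by simp
  moreover have "length xs \<noteq> 0" using sum by auto
  moreover have "length xs \<noteq> 1"
  proof
    assume "length xs = 1"
    then obtain x where "xs = [x]" by (cases xs) auto
    with no_strict_max sum show False by simp
  qed
  moreover have "length xs \<noteq> 5"
  proof
    assume len: "length xs = 5"
    have "\<exists>x\<in>set xs. 2 \<le> h x"
    proof (rule ccontr)
      assume "\<not> ?thesis"
      then have "sum_list (map h xs) \<le> sum_list (map (\<lambda>_. 1) xs)"
        by (intro sum_list_mono) auto
      with sum len show False by (simp add: sum_list_triv)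
    qed
    with pair_bound len show False by fastforce
  qed
  ultimately show "length xs \<in> {2, 3, 4, 6}" by (simp only: insert_iff empty_iff) presburger
  assume len: "length xs = 3"
  have le2: "h x \<le> 2" if "x \<in> set xs" for x
    using pair_bound[OF that] len by (cases "2 \<le> h x") auto
  show "\<forall>x\<in>set xs. h x = 2"
  proof
    fix x assume x: "x \<in> set xs"
    have "sum_list (map h (remove1 x xs)) \<le> sum_list (map (\<lambda>_. 2) (remove1 x xs))"
      by (intro sum_list_mono le2) (meson notin_set_remove1)
    then have "sum_list (map h (remove1 x xs)) \<le> 4"
      using x len by (simp add: sum_list_triv length_remove1)
    then show "h x = 2" using sum_list_map_remove1[OF x, of h] sum le2[OF x] by simp
  qed
qed

locale square_zero_local_ring =
  fixes \<mm> :: "'a::comm_ring_1 set"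
  assumes maximal_ideal_eq: "\<mm> = nonunits"
    and ideal: "is_ideal \<mm>"
    and square_zero: "a \<in> \<mm> \<Longrightarrow> b \<in> \<mm> \<Longrightarrow> a * b = 0"
begin

lemma mem_iff: "a \<in> \<mm> \<longleftrightarrow> \<not> a dvd 1"
  by (simp add: maximal_ideal_eq nonunits_def)

lemma zero_mem: "0 \<in> \<mm>" and add_mem: "a \<in> \<mm> \<Longrightarrow> b \<in> \<mm> \<Longrightarrow> a + b \<in> \<mm>"
  and mult_mem: "a \<in> \<mm> \<Longrightarrow> r * a \<in> \<mm>"
  using ideal by (auto simp: is_ideal_def)

lemma mult_mem_right: "a \<in> \<mm> \<Longrightarrow> a * r \<in> \<mm>"
  using mult_mem[of a r] by (simp add: mult.commute)

lemma uminus_mem: "a \<in> \<mm> \<Longrightarrow> - a \<in> \<mm>"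
  using mult_mem[of a "-1"] by simp

lemma one_not_mem: "1 \<notin> \<mm>"
  by (simp add: mem_iff)

lemma sum_mem: "(\<And>i. i \<in> A \<Longrightarrow> f i \<in> \<mm>) \<Longrightarrow> sum f A \<in> \<mm>"
  by (induction A rule: infinite_finite_induct) (auto simp: zero_mem add_mem)

lemma add_mem_not_mem:
  assumes "a \<notin> \<mm>" "b \<in> \<mm>" shows "a + b \<notin> \<mm>"
proof
  assume "a + b \<in> \<mm>"
  from add_mem[OF this uminus_mem[OF assms(2)]] assms(1) show False by simp
qed

lemma mult_not_mem: "a \<notin> \<mm> \<Longrightarrow> b \<notin> \<mm> \<Longrightarrow> a * b \<notin> \<mm>"
  using mult_dvd_mono[of a 1 b 1] by (simp add: mem_iff)

lemma not_mem_mult_eq_0: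
  assumes "a \<notin> \<mm>" shows "a * b = 0 \<longleftrightarrow> b = 0"
proof -
  obtain c where "1 = a * c" using assms by (auto simp: mem_iff elim!: dvdE)
  then have "b = c * (a * b)" by (metis mult.assoc mult.commute mult_1_left)
  then show ?thesis by auto
qed

text \<open>\<open>f\<close> is congruent modulo \<open>\<mm>\<close> to a unit multiple of \<open>x\<^sup>d\<close>; the residue ring \<open>R/\<mm>\<close> is never
  formed, membership in \<open>\<mm>\<close> is tested coefficientwise.\<close>
definition residue_monomial :: "'a poly \<Rightarrow> nat \<Rightarrow> bool" where
  "residue_monomial f d \<longleftrightarrow> coeff f d \<notin> \<mm> \<and> (\<forall>n. n \<noteq> d \<longrightarrow> coeff f n \<in> \<mm>)"

definition residue_degree :: "'a poly \<Rightarrow> nat" where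
  "residue_degree f = (LEAST d. coeff f d \<notin> \<mm>)"

lemma residue_monomial_unique: "residue_monomial f d \<Longrightarrow> coeff f n \<notin> \<mm> \<Longrightarrow> n = d"
  unfolding residue_monomial_def by blast

lemma residue_degree_eq: "residue_monomial f d \<Longrightarrow> residue_degree f = d"
  unfolding residue_degree_def residue_monomial_def by (rule Least_equality) auto

lemma residue_monomial_one: "residue_monomial 1 0"
  unfolding residue_monomial_def using one_not_mem zero_mem by (auto simp: coeff_1)

lemma residue_monomial_X_power: "residue_monomial ([:0, 1:] ^ n) n"
  unfolding residue_monomial_def using one_not_mem zero_mem by (simp add: coeff_X_power)

lemma coeff_mult_mem:
  "(\<And>i. i \<le> n \<Longrightarrow> coeff f i * coeff g (n - i) \<in> \<mm>) \<Longrightarrow> coeff (f * g) n \<in> \<mm>"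
  unfolding coeff_mult by (rule sum_mem) auto

lemma coeff_mult_not_mem:
  assumes "coeff f a \<notin> \<mm>" "coeff g b \<notin> \<mm>"
    and "\<And>i. i \<le> a + b \<Longrightarrow> i \<noteq> a \<Longrightarrow> coeff f i * coeff g (a + b - i) \<in> \<mm>"
  shows "coeff (f * g) (a + b) \<notin> \<mm>"
proof -
  have "coeff (f * g) (a + b) = coeff f a * coeff g b +
      (\<Sum>i\<in>{..a + b} - {a}. coeff f i * coeff g (a + b - i))"
    unfolding coeff_mult by (subst sum.remove[of _ a]) auto
  moreover have "(\<Sum>i\<in>{..a + b} - {a}. coeff f i * coeff g (a + b - i)) \<in> \<mm>"
    by (rule sum_mem) (use assms(3) in auto)
  ultimately show ?thesis using assms(1,2) mult_not_mem add_mem_not_mem by simp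
qed

lemma residue_monomial_mult:
  assumes f: "residue_monomial f d" and g: "residue_monomial g e"
  shows "residue_monomial (f * g) (d + e)"
  unfolding residue_monomial_def
proof (intro conjI allI impI)
  show "coeff (f * g) (d + e) \<notin> \<mm>"
    by (rule coeff_mult_not_mem) (use f g mult_mem_right in \<open>auto simp: residue_monomial_def\<close>)
  fix n assume "n \<noteq> d + e"
  then show "coeff (f * g) n \<in> \<mm>"
    using f g mult_mem mult_mem_right
    by (intro coeff_mult_mem) (metis residue_monomial_def le_add_diff_inverse)
qed

lemma residue_monomial_prod_list:
  "\<forall>f\<in>set fs. residue_monomial f (residue_degree f) \<Longrightarrow>
    residue_monomial (prod_list fs) (sum_list (map residue_degree fs))"
  by (induction fs) (auto simp: residue_monomial_one intro: residue_monomial_mult)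

lemma obtain_extreme_unit_coeffs:
  assumes "coeff f k \<notin> \<mm>"
  obtains lo hi where "lo \<le> hi" "coeff f lo \<notin> \<mm>" "coeff f hi \<notin> \<mm>"
    "\<forall>i<lo. coeff f i \<in> \<mm>" "\<forall>i>hi. coeff f i \<in> \<mm>"
proof -
  define S where "S = {i. coeff f i \<notin> \<mm>}"
  have "S \<subseteq> {..degree f}"
    using zero_mem by (force simp: S_def intro: le_degree)
  then have fin: "finite S" by (rule finite_subset) simp
  have ne: "S \<noteq> {}" using assms by (auto simp: S_def)
  show thesis
  proof (rule that[of "Min S" "Max S"])
    show "Min S \<le> Max S" using Min_le[OF fin Max_in[OF fin ne]] .
    show "coeff f (Min S) \<notin> \<mm>" "coeff f (Max S) \<notin> \<mm>"
      using Min_in[OF fin ne] Max_in[OF fin ne] by (auto simp: S_def)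
    show "\<forall>i<Min S. coeff f i \<in> \<mm>" "\<forall>i>Max S. coeff f i \<in> \<mm>"
      using Min_le[OF fin] Max_ge[OF fin] by (force simp: S_def)+
  qed
qed

text \<open>Comparing the lowest and the highest unit coefficients of the factors shows that both
  products land in the same degree, so each factor has a single unit coefficient.\<close>
lemma residue_monomial_factors:
  assumes fg: "residue_monomial (f * g) n"
  obtains d e where "residue_monomial f d" "residue_monomial g e" "d + e = n"
proof -
  have coeff_n: "coeff (f * g) n \<notin> \<mm>" using fg by (simp add: residue_monomial_def)
  obtain k where "coeff f k \<notin> \<mm>"
    using coeff_n coeff_mult_mem mult_mem_right by blast
  then obtain lo hi where f: "lo \<le> hi" "coeff f lo \<notin> \<mm>" "coeff f hi \<notin> \<mm>"
    "\<forall>i<lo. coeff f i \<in> \<mm>" "\<forall>i>hi. coeff f i \<in> \<mm>"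
    by (rule obtain_extreme_unit_coeffs)
  obtain k' where "coeff g k' \<notin> \<mm>"
    using coeff_n coeff_mult_mem mult_mem by blast
  then obtain lo' hi' where g: "lo' \<le> hi'" "coeff g lo' \<notin> \<mm>" "coeff g hi' \<notin> \<mm>"
    "\<forall>i<lo'. coeff g i \<in> \<mm>" "\<forall>i>hi'. coeff g i \<in> \<mm>"
    by (rule obtain_extreme_unit_coeffs)
  have "coeff (f * g) (lo + lo') \<notin> \<mm>"
  proof (rule coeff_mult_not_mem[OF f(2) g(2)])
    fix i assume "i \<le> lo + lo'" "i \<noteq> lo"
    then show "coeff f i * coeff g (lo + lo' - i) \<in> \<mm>"
      using f(4) g(4) mult_mem mult_mem_right by (cases "i < lo") auto
  qed
  moreover have "coeff (f * g) (hi + hi') \<notin> \<mm>"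
  proof (rule coeff_mult_not_mem[OF f(3) g(3)])
    fix i assume "i \<le> hi + hi'" "i \<noteq> hi"
    then show "coeff f i * coeff g (hi + hi' - i) \<in> \<mm>"
      using f(5) g(5) mult_mem mult_mem_right by (cases "i < hi") auto
  qed
  ultimately have "lo + lo' = n" "hi + hi' = n"
    using residue_monomial_unique[OF fg] by auto
  then have "lo = hi" "lo' = hi'" using f(1) g(1) by auto
  then have "residue_monomial f lo" "residue_monomial g lo'"
    using f g unfolding residue_monomial_def by (metis linorder_neqE_nat)+
  then show thesis using \<open>lo + lo' = n\<close> by (rule that)
qed

lemma residue_monomial_prod_list_factors:
  "residue_monomial (prod_list fs) n \<Longrightarrow>
    (\<forall>f\<in>set fs. residue_monomial f (residue_degree f)) \<and> sum_list (map residue_degree fs) = n"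
proof (induction fs arbitrary: n)
  case Nil
  then show ?case using residue_monomial_unique[OF Nil] one_not_mem by simp
next
  case (Cons f fs)
  then obtain d e where "residue_monomial f d" "residue_monomial (prod_list fs) e" "d + e = n"
    by (auto elim: residue_monomial_factors)
  then show ?case using Cons.IH[of e] residue_degree_eq by auto
qed

text \<open>Inverse of a unit lifting its residue \<open>c\<close>: since \<open>(f - c)\<^sup>2 = 0\<close>, the element
  \<open>1 + c\<inverse> (f - c)\<close> is inverted by \<open>1 - c\<inverse> (f - c)\<close>.\<close>
lemma is_unit_iff_residue_monomial_0: "f dvd 1 \<longleftrightarrow> residue_monomial f 0"
proof
  assume "f dvd 1"
  then obtain g where "1 = f * g" by (elim dvdE)
  then show "residue_monomial f 0"
    using residue_monomial_one by (metis add_is_0 residue_monomial_factors)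
next
  assume f: "residue_monomial f 0"
  define c where "c = coeff f 0"
  then obtain c' where cc': "c * c' = 1"
    using f by (auto simp: residue_monomial_def mem_iff elim!: dvdE)
  define h where "h = [:c':] * (f - [:c:])"
  have "coeff (f - [:c:]) n \<in> \<mm>" for n
    using f zero_mem by (cases n) (auto simp: residue_monomial_def c_def)
  then have "(f - [:c:]) * (f - [:c:]) = 0"
    by (intro poly_eqI) (simp add: coeff_mult square_zero)
  moreover have "h * h = [:c':] * [:c':] * ((f - [:c:]) * (f - [:c:]))"
    by (simp add: h_def ac_simps)
  ultimately have hh: "h * h = 0" by simp
  have "f * [:c':] = h + [:c * c':]" by (simp add: h_def algebra_simps)
  also have "[:c * c':] = 1" using cc' by (simp add: one_pCons)
  finally have "f * ([:c':] * (1 - h)) = (h + 1) * (1 - h)" by (metis mult.assoc)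
  also have "\<dots> = 1" using hh by (simp add: algebra_simps)
  finally show "f dvd 1" by (metis dvdI)
qed

lemma residue_monomial_is_unit_iff: "residue_monomial f d \<Longrightarrow> f dvd 1 \<longleftrightarrow> d = 0"
  unfolding is_unit_iff_residue_monomial_0 residue_monomial_def by auto

lemma irreducible_residue_degree_pos: "irreducible f \<Longrightarrow> residue_monomial f d \<Longrightarrow> 0 < d"
  using residue_monomial_is_unit_iff irreducible_not_unit by blast

lemma irreducibleI_residue_monomial:
  assumes f: "residue_monomial f d" and "0 < d" and "d = 1 \<or> coeff f 0 \<noteq> 0"
  shows "irreducible f"
proof (rule irreducibleI)
  show "f \<noteq> 0" using f zero_mem by (auto simp: residue_monomial_def)
  show "\<not> f dvd 1" using residue_monomial_is_unit_iff[OF f] \<open>0 < d\<close> by simp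
  fix a b assume ab: "f = a * b"
  show "a dvd 1 \<or> b dvd 1"
  proof (rule ccontr)
    assume "\<not> (a dvd 1 \<or> b dvd 1)"
    moreover obtain i j where ij: "residue_monomial a i" "residue_monomial b j" "i + j = d"
      using f ab by (auto elim: residue_monomial_factors)
    ultimately have "0 < i" "0 < j" using residue_monomial_is_unit_iff by auto
    then have "coeff a 0 \<in> \<mm>" "coeff b 0 \<in> \<mm>" using ij by (auto simp: residue_monomial_def)
    then have "coeff f 0 = 0" by (simp add: ab coeff_mult_0 square_zero)
    with assms(3) ij \<open>0 < i\<close> \<open>0 < j\<close> show False by auto
  qed
qed

lemma irreducible_X: "irreducible ([:0, 1:] :: 'a::comm_ring_1 poly)"
  using irreducibleI_residue_monomial residue_monomial_X_power[of 1] by simp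

lemma irreducible_X_power_plus_const:
  assumes "a \<in> \<mm>" "a \<noteq> 0" "0 < d"
  shows "irreducible ([:0, 1:] ^ d + [:a:])"
proof (rule irreducibleI_residue_monomial)
  show "residue_monomial ([:0, 1:] ^ d + [:a:]) d"
    using assms one_not_mem zero_mem
    by (auto simp: residue_monomial_def coeff_X_power coeff_pCons split: nat.splits)
qed (use assms in \<open>auto simp: coeff_X_power\<close>)

lemma irreducible_coeff_0_neq_0:
  assumes irr: "irreducible f" and f: "residue_monomial f d" and "2 \<le> d"
  shows "coeff f 0 \<noteq> 0"
proof
  assume "coeff f 0 = 0"
  then obtain q where "f = pCons 0 q" by (cases f) simp
  then have fq: "f = [:0, 1:] * q" by simp
  have "residue_monomial q (d - 1)"
    using f \<open>2 \<le> d\<close> unfolding fq residue_monomial_def by (auto simp: coeff_pCons split: nat.splits)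
  then have "\<not> q dvd 1" using residue_monomial_is_unit_iff \<open>2 \<le> d\<close> by simp
  moreover have "\<not> [:0, 1:] dvd (1 :: 'a::comm_ring_1 poly)"
    using irreducible_X irreducible_not_unit by blast
  ultimately show False using irreducibleD[OF irr fq] by blast
qed

text \<open>Since \<open>\<mm>\<^sup>2 = 0\<close>, a product of polynomials \<open>u\<^sub>i x\<^sup>d\<^sup>\<^sub>i + m\<^sub>i\<close> is \<open>\<Prod> u\<^sub>i x\<^sup>d\<^sup>\<^sub>i\<close> plus terms
  in which a single \<open>m\<^sub>j\<close> occurs, so it has no coefficients below degree \<open>\<Sum> d\<^sub>i - max d\<^sub>i\<close>.\<close>
lemma coeff_prod_list_below_eq_0:
  assumes "\<forall>g\<in>set gs. residue_monomial g (residue_degree g) \<and> residue_degree g \<le> b"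
    and "n + b < sum_list (map residue_degree gs)"
  shows "coeff (prod_list gs) n = 0"
  using assms
proof (induction gs arbitrary: n)
  case Nil
  then show ?case by simp
next
  case (Cons g gs)
  define d where "d = residue_degree g"
  define s where "s = sum_list (map residue_degree gs)"
  have g: "residue_monomial g d" "d \<le> b" using Cons.prems(1) by (auto simp: d_def)
  have gs: "residue_monomial (prod_list gs) s"
    unfolding s_def using Cons.prems(1) by (intro residue_monomial_prod_list) auto
  have lt: "n + b < d + s" using Cons.prems(2) by (simp add: d_def s_def)
  have "coeff g i * coeff (prod_list gs) (n - i) = 0" if "i \<le> n" for i
  proof (cases "n - i + b < s")
    case True
    then show ?thesis using Cons.IH[of "n - i"] Cons.prems(1) by (simp add: s_def)
  next
    case False
    then have "coeff g i \<in> \<mm>" "coeff (prod_list gs) (n - i) \<in> \<mm>"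
      using g gs lt that by (auto simp: residue_monomial_def)
    then show ?thesis by (rule square_zero)
  qed
  then show ?case by (simp add: coeff_mult)
qed

text \<open>If \<open>f\<close> dominated, let \<open>P\<close> be the product of the other factors and \<open>s\<close> its residue degree. In
  the \<open>x\<^sup>s\<close> coefficient of \<open>f P\<close> the terms \<open>f\<^sub>i P\<^sub>s\<^sub>-\<^sub>i\<close> with \<open>i \<notin> {0, d}\<close> lie in \<open>\<mm>\<^sup>2 = 0\<close> and
  \<open>P\<^sub>s\<^sub>-\<^sub>d = 0\<close> by the previous lemma, leaving \<open>f\<^sub>0 P\<^sub>s \<noteq> 0\<close>; but \<open>s \<noteq> n\<close>.\<close>
lemma factor_of_X_power_not_dominant:
  assumes fs: "prod_list fs = [:0, 1:] ^ n"
    and monomial: "\<forall>g\<in>set fs. residue_monomial g (residue_degree g)"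
    and f: "f \<in> set fs" and pos: "0 < residue_degree f" and f0: "coeff f 0 \<noteq> 0"
  shows "\<exists>g\<in>set (remove1 f fs). residue_degree f \<le> residue_degree g"
proof (rule ccontr)
  assume dominant: "\<not> ?thesis"
  define d where "d = residue_degree f"
  define gs where "gs = remove1 f fs"
  define s where "s = sum_list (map residue_degree gs)"
  have lower: "\<forall>g\<in>set gs. residue_monomial g (residue_degree g) \<and> residue_degree g \<le> d - 1"
    using dominant monomial by (auto simp: gs_def d_def dest: notin_set_remove1)
  have mf: "residue_monomial f d" using monomial f by (simp add: d_def)
  have mgs: "residue_monomial (prod_list gs) s"
    unfolding s_def using lower by (intro residue_monomial_prod_list) auto
  have "d + s = n"
    using residue_monomial_prod_list_factors[of fs n] fs residue_monomial_X_power
      sum_list_map_remove1[OF f, of residue_degree] by (simp add: d_def s_def gs_def)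
  have "coeff f i * coeff (prod_list gs) (s - i) = 0" if "i \<in> {..s} - {0}" for i
  proof (cases "i = d")
    case True
    then show ?thesis
      using coeff_prod_list_below_eq_0[OF lower, of "s - i"] pos that by (simp add: d_def s_def)
  next
    case False
    then have "coeff f i \<in> \<mm>" "coeff (prod_list gs) (s - i) \<in> \<mm>"
      using mf mgs that by (auto simp: residue_monomial_def)
    then show ?thesis by (rule square_zero)
  qed
  then have "coeff (f * prod_list gs) s = coeff f 0 * coeff (prod_list gs) s"
    unfolding coeff_mult by (subst sum.remove[of _ 0]) auto
  moreover have "coeff f 0 \<in> \<mm>" "coeff (prod_list gs) s \<notin> \<mm>"
    using mf mgs pos by (auto simp: residue_monomial_def d_def)
  ultimately have "coeff (f * prod_list gs) s \<noteq> 0"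
    using f0 not_mem_mult_eq_0 by (metis mult.commute)
  moreover have "f * prod_list gs = [:0, 1:] ^ n"
    using fs prod_list_remove1[OF f] by (simp add: gs_def)
  ultimately show False using \<open>d + s = n\<close> pos by (simp add: coeff_X_power d_def)
qed

lemma irreducible_factors_of_X_power:
  assumes "prod_list fs = [:0, 1:] ^ n" and irr: "\<forall>g\<in>set fs. irreducible g"
  shows "\<forall>g\<in>set fs. residue_monomial g (residue_degree g) \<and> 0 < residue_degree g"
    and "sum_list (map residue_degree fs) = n"
    and "\<forall>g\<in>set fs. 2 \<le> residue_degree g \<longrightarrow>
           (\<exists>h\<in>set (remove1 g fs). residue_degree g \<le> residue_degree h)"
proof -
  show monomial: "\<forall>g\<in>set fs. residue_monomial g (residue_degree g) \<and> 0 < residue_degree g"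
    and "sum_list (map residue_degree fs) = n"
    using residue_monomial_prod_list_factors[of fs n] assms residue_monomial_X_power
      irreducible_residue_degree_pos by auto
  show "\<forall>g\<in>set fs. 2 \<le> residue_degree g \<longrightarrow>
      (\<exists>h\<in>set (remove1 g fs). residue_degree g \<le> residue_degree h)"
  proof (intro ballI impI)
    fix g assume g: "g \<in> set fs" "2 \<le> residue_degree g"
    then have "coeff g 0 \<noteq> 0" using monomial irr irreducible_coeff_0_neq_0 by blast
    with g show "\<exists>h\<in>set (remove1 g fs). residue_degree g \<le> residue_degree h"
      using factor_of_X_power_not_dominant[OF assms(1)] monomial by simp
  qed
qed

lemma lengths_X_power_6_subset: "lengths ([:0, 1:] ^ 6 :: 'a::comm_ring_1 poly) \<subseteq> {2, 3, 4, 6}"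
proof
  fix k assume "k \<in> lengths ([:0, 1:] ^ 6 :: 'a poly)"
  then obtain fs :: "'a poly list"
    where fs: "prod_list fs = [:0, 1:] ^ 6" "\<forall>g\<in>set fs. irreducible g" "length fs = k"
    unfolding lengths_def by blast
  with irreducible_factors_of_X_power[OF fs(1,2)] show "k \<in> {2, 3, 4, 6}"
    using length_composition_6_without_strict_max(1)[of fs residue_degree] by simp
qed

lemma three_irreducible_factors_of_X_power_6:
  assumes "prod_list fs = [:0, 1:] ^ 6" "\<forall>g\<in>set fs. irreducible g" "length fs = 3"
  obtains f g h where "fs = [f, g, h]"
    "residue_monomial f 2" "residue_monomial g 2" "residue_monomial h 2"
    "coeff f 0 \<noteq> 0" "coeff g 0 \<noteq> 0" "coeff h 0 \<noteq> 0"
proof -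
  obtain f g h where fs: "fs = [f, g, h]"
    using \<open>length fs = 3\<close> by (auto simp: numeral_3_eq_3 length_Suc_conv)
  have "\<forall>g\<in>set fs. residue_degree g = 2"
    using length_composition_6_without_strict_max(2)[of fs residue_degree]
      irreducible_factors_of_X_power[OF assms(1,2)] assms(3) by simp
  then have "residue_monomial g 2 \<and> coeff g 0 \<noteq> 0" if "g \<in> set fs" for g
    using irreducible_factors_of_X_power(1)[OF assms(1,2)] assms(2) that
      irreducible_coeff_0_neq_0[of g 2] by auto
  then show thesis using that fs by simp
qed

text \<open>Here \<open>\<mm> = {0, e}\<close> and \<open>R/\<mm>\<close> is the field with two elements, so \<open>e u = e\<close> for every unit
  \<open>u\<close> and \<open>e + e = 0\<close>. Hence the constant terms of all three factors equal \<open>e\<close>, the \<open>x\<^sup>2\<close>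
  coefficient \<open>e g\<^sub>2 + e h\<^sub>2\<close> of \<open>g h\<close> vanishes, and the \<open>x\<^sup>4\<close> coefficient of \<open>f g h\<close> is \<open>e\<close>.\<close>
lemma coeff_4_of_three_quadratic_factors_neq_0:
  assumes pair: "\<mm> = {0, e}" and e: "e \<noteq> 0"
    and f: "residue_monomial f 2" "coeff f 0 \<noteq> 0"
    and g: "residue_monomial g 2" "coeff g 0 \<noteq> 0"
    and h: "residue_monomial h 2" "coeff h 0 \<noteq> 0"
  shows "coeff (f * (g * h)) 4 \<noteq> 0"
proof -
  have e_mem: "e \<in> \<mm>" using pair by simp
  have unit_absorbed: "e * u = e" if "u \<notin> \<mm>" for u
    using mult_mem_right[OF e_mem, of u] not_mem_mult_eq_0[OF that, of e] e pair
    by (auto simp: mult.commute)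
  have "e + e \<in> \<mm>" using add_mem e_mem by blast
  then have ee: "e + e = 0" using pair e by auto
  have mem: "coeff p n \<in> \<mm>" if "residue_monomial p 2" "n \<noteq> 2" for p n
    using that by (simp add: residue_monomial_def)
  have unit: "coeff p 2 \<notin> \<mm>" if "residue_monomial p 2" for p
    using that by (simp add: residue_monomial_def)
  have const: "coeff f 0 = e" "coeff g 0 = e" "coeff h 0 = e"
    using f g h mem[of _ 0] pair by auto
  have gh0: "coeff (g * h) 0 = 0" by (simp add: coeff_mult_0 const square_zero e_mem)
  have gh1: "coeff (g * h) 1 = 0"
    using square_zero[OF mem[OF g(1)] mem[OF h(1)]] by (simp add: coeff_mult)
  have "coeff (g * h) 2 = e * coeff h 2 + coeff g 1 * coeff h 1 + e * coeff g 2"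
    by (simp add: coeff_mult numeral_2_eq_2 const mult.commute)
  also have "\<dots> = e + e"
    using unit_absorbed unit g h square_zero[OF mem[OF g(1)] mem[OF h(1)]] by simp
  finally have gh2: "coeff (g * h) 2 = 0" using ee by simp
  have "residue_monomial (g * h) 4" using residue_monomial_mult[OF g(1) h(1)] by simp
  then have gh3: "coeff (g * h) 3 \<in> \<mm>" and gh4: "coeff (g * h) 4 \<notin> \<mm>"
    by (auto simp: residue_monomial_def)
  have atMost_4: "{..4::nat} = {0, 1, 2, 3, 4}" by auto
  have "coeff (f * (g * h)) 4 = e * coeff (g * h) 4 + coeff f 1 * coeff (g * h) 3"
    by (subst coeff_mult) (simp add: atMost_4 const gh0 gh1 gh1[unfolded One_nat_def] gh2)
  also have "\<dots> = e" using unit_absorbed[OF gh4] square_zero[OF mem[OF f(1)] gh3] by simp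
  finally show ?thesis using e by simp
qed

lemma three_notin_lengths_X_power_6:
  assumes pair: "\<mm> = {0, e}" and "e \<noteq> 0"
  shows "3 \<notin> lengths ([:0, 1:] ^ 6 :: 'a::comm_ring_1 poly)"
proof
  assume "3 \<in> lengths ([:0, 1:] ^ 6 :: 'a::comm_ring_1 poly)"
  then obtain fs :: "'a poly list"
    where fs: "prod_list fs = [:0, 1:] ^ 6" "\<forall>g\<in>set fs. irreducible g" "length fs = 3"
    unfolding lengths_def by blast
  then obtain f g h where fgh: "fs = [f, g, h]"
    "residue_monomial f 2" "residue_monomial g 2" "residue_monomial h 2"
    "coeff f 0 \<noteq> 0" "coeff g 0 \<noteq> 0" "coeff h 0 \<noteq> 0"
    by (rule three_irreducible_factors_of_X_power_6)
  then have "coeff (f * (g * h)) 4 \<noteq> 0"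
    by (intro coeff_4_of_three_quadratic_factors_neq_0[OF assms])
  moreover have "f * (g * h) = [:0, 1:] ^ 6" using fs(1) fgh(1) by simp
  ultimately show False by (simp add: coeff_X_power)
qed

lemma three_in_lengths_X_power_6:
  assumes "a \<in> \<mm>" "b \<in> \<mm>" "c \<in> \<mm>" "a \<noteq> 0" "b \<noteq> 0" "c \<noteq> 0" "a + b + c = 0"
  shows "3 \<in> lengths ([:0, 1:] ^ 6 :: 'a::comm_ring_1 poly)"
proof (rule in_lengthsI)
  let ?fs = "[[:0, 1:] ^ 2 + [:a:], [:0, 1:] ^ 2 + [:b:], [:0, 1:] ^ 2 + [:c:]]"
  have "prod_list ?fs = ([:0, 1:] ^ 2) ^ 3"
    using mult_shifts_eq_power(2)[of "[:a:]" "[:b:]" "[:c:]" "[:0, 1:] ^ 2"] assms square_zero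
    by (simp add: mult.assoc)
  then show "prod_list ?fs = [:0, 1:] ^ 6" by (simp flip: power_mult)
qed (use assms irreducible_X_power_plus_const in auto)

lemma two_four_six_in_lengths_X_power_6:
  assumes "e \<in> \<mm>" "e \<noteq> 0"
  shows "{2, 4, 6} \<subseteq> lengths ([:0, 1:] ^ 6 :: 'a::comm_ring_1 poly)"
proof -
  have X6: "x ^ 6 = (x ^ 3) ^ 2" "x ^ 6 = (x ^ 2) ^ 2 * x * x" for x :: "'a poly"
    by (simp_all flip: power_mult power_Suc2)
  have shift: "(x + [:e:]) * (x + [:- e:]) = x ^ 2" for x :: "'a poly"
    using mult_shifts_eq_power(1)[of "[:e:]" "[:- e:]" x] square_zero[OF assms(1) assms(1)] by simp
  have "2 \<in> lengths ([:0, 1:] ^ 6 :: 'a::comm_ring_1 poly)"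
    by (rule in_lengthsI[of "[[:0, 1:] ^ 3 + [:e:], [:0, 1:] ^ 3 + [:- e:]]"])
      (use assms uminus_mem irreducible_X_power_plus_const shift X6 in auto)
  moreover have "4 \<in> lengths ([:0, 1:] ^ 6 :: 'a::comm_ring_1 poly)"
    by (rule in_lengthsI[of "[[:0, 1:] ^ 2 + [:e:], [:0, 1:] ^ 2 + [:- e:], [:0, 1:], [:0, 1:]]"])
      (use assms uminus_mem irreducible_X_power_plus_const irreducible_X shift X6 in
        \<open>auto simp: mult.assoc\<close>)
  moreover have "6 \<in> lengths ([:0, 1:] ^ 6 :: 'a::comm_ring_1 poly)"
    by (rule in_lengthsI[of "replicate 6 [:0, 1:]"]) (use irreducible_X in auto)
  ultimately show ?thesis by simp
qed

lemma exists_zero_sum_triple: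
  assumes "e \<in> \<mm>" "e \<noteq> 0" "\<mm> \<noteq> {0, e}"
  obtains b c where "b \<in> \<mm>" "c \<in> \<mm>" "b \<noteq> 0" "c \<noteq> 0" "e + b + c = 0"
proof (cases "\<exists>b\<in>\<mm>. b \<noteq> 0 \<and> e + b \<noteq> 0")
  case True
  then obtain b where "b \<in> \<mm>" "b \<noteq> 0" "e + b \<noteq> 0" by blast
  then show thesis
    using that[of b "- (e + b)"] uminus_mem[OF add_mem[OF assms(1)]] by (simp add: neg_eq_iff_add_eq_0)
next
  case False
  then have minus_e: "b = - e" if "b \<in> \<mm>" "b \<noteq> 0" for b
    using that by (auto simp: add_eq_0_iff)
  then have "- e = e" using assms(1,2) by metis
  with minus_e have "\<mm> \<subseteq> {0, e}" by auto
  then show thesis using assms zero_mem by blast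
qed

lemma maximal_ideal_eq_pair_iff_card_4:
  assumes e: "e \<in> \<mm>" "e \<noteq> 0"
  shows "\<mm> = {0, e} \<longleftrightarrow> finite (UNIV :: 'a::comm_ring_1 set) \<and> card (UNIV :: 'a set) = 4"
proof -
  have units: "1 \<notin> \<mm>" "1 + e \<notin> \<mm>" using one_not_mem add_mem_not_mem e by auto
  have card: "card {0, e, 1, 1 + e} = 4"
    using units e zero_mem by (auto simp: card_insert_if)
  show ?thesis
  proof
    assume pair: "\<mm> = {0, e}"
    have "x \<in> {0, e, 1, 1 + e}" for x
    proof (cases "x \<in> \<mm>")
      case False
      then have "x * e \<in> \<mm>" "x * e \<noteq> 0" using e mult_mem not_mem_mult_eq_0 by auto
      then have "(x - 1) * e = 0" using pair by (simp add: algebra_simps)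
      then have "x - 1 \<in> {0, e}" using e not_mem_mult_eq_0 pair by blast
      then show ?thesis by (auto simp: algebra_simps)
    qed (use pair in auto)
    then have "UNIV = {0, e, 1, 1 + e}" by blast
    then show "finite (UNIV :: 'a set) \<and> card (UNIV :: 'a set) = 4"
      using card by (metis finite.emptyI finite.insertI)
  next
    assume "finite (UNIV :: 'a set) \<and> card (UNIV :: 'a set) = 4"
    then have "{0, e, 1, 1 + e} = UNIV" using card by (intro card_subset_eq) auto
    then have "\<mm> \<subseteq> {0, e}" using units by auto
    then show "\<mm> = {0, e}" using e zero_mem by blast
  qed
qed

lemma lengths_X_power_6:
  assumes "e \<in> \<mm>" "e \<noteq> 0"
  shows "lengths ([:0, 1:] ^ 6 :: 'a::comm_ring_1 poly) =
    (if \<mm> = {0, e} then {2, 4, 6} else {2, 3, 4, 6})"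
proof (cases "\<mm> = {0, e}")
  case True
  then show ?thesis using lengths_X_power_6_subset two_four_six_in_lengths_X_power_6[OF assms]
      three_notin_lengths_X_power_6 assms by auto
next
  case False
  then obtain b c where "b \<in> \<mm>" "c \<in> \<mm>" "b \<noteq> 0" "c \<noteq> 0" "e + b + c = 0"
    using exists_zero_sum_triple assms by blast
  then show ?thesis using lengths_X_power_6_subset two_four_six_in_lengths_X_power_6[OF assms]
      three_in_lengths_X_power_6 assms False by auto
qed

end

theorem lemma4p10:
  assumes "local_ring TYPE('a::comm_ring_1)"
    and "artinian_ring TYPE('a)"
    and "nonunits \<noteq> {0::'a}"
    and "\<forall>a\<in>(nonunits::'a set). \<forall>b\<in>nonunits. a * b = 0"
  shows "((infinite (UNIV::'a set) \<or> card (UNIV::'a set) > 4) \<longrightarrow>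
           lengths ([:0, 1:] ^ 6 :: 'a poly) = {2, 3, 4, 6}) \<and>
         ((finite (UNIV::'a set) \<and> card (UNIV::'a set) = 4) \<longrightarrow>
           lengths ([:0, 1:] ^ 6 :: 'a poly) = {2, 4, 6})"
proof -
  interpret square_zero_local_ring "nonunits :: 'a set"
    using assms(1,4) by unfold_locales (auto simp: local_ring_def)
  obtain e :: 'a where "e \<in> nonunits" "e \<noteq> 0" using assms(3) zero_mem by blast
  then show ?thesis using lengths_X_power_6 maximal_ideal_eq_pair_iff_card_4 by auto
qed

end
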